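(* Let $f$ be a non-constant meromorphic function of finite $\varphi$-order, let $a\in\widehat{\mathbb{C}}$, and write $n(r)=n(r,a,f)$, $N(r)=N(r,a,f)$. Then $$\rho_\varphi(N(r))\le\rho_\varphi(n(r))+\beta_\varphi,\qquad \rho_\varphi(N(r))\ge\alpha_{\varphi,s}\rho_\varphi(n(r))+\alpha_{\varphi,s}\gamma_{\varphi,s}.$$
   Context: Let $R_0>0$. $\varphi:(R_0,\infty)\to(0,\infty)$ is a non-decreasing unbounded function with $\log r\le\varphi(r)\le r$ for $r\ge R_0$; $s:(R_0,\infty)\to(0,\infty)$ is non-decreasing with $r<s(r)\le r^2$ for $r\ge R_0$ and $\liminf_{r\to\infty}s(r)/r>1$. For a non-negative non-decreasing function $g$, $\rho_\varphi(g)=\limsup_{r\to\infty}\frac{\log g(r)}{\log\varphi(r)}$; for meromorphic $f$, $\rho_\varphi(f)=\rho_\varphi(T(r,f))$. $n(r,a,f)$ counts $a$-points in $|z|\le r$ with multiplicity and $N(r,a,f)$ is the integrated counting function. Define $$\alpha_{\varphi,s}=\liminf_{r\to\infty}\frac{\log\varphi(r)}{\log\varphi(s(r))},\quad \beta_\varphi=\limsup_{r\to\infty}\frac{\log\log r}{\log\varphi(r)},\quad \gamma_{\varphi,s}=\liminf_{r\to\infty}\frac{\log\log\frac{s(r)}{r}}{\log\varphi(r)}.$$ *)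

theory Defs
  imports "HOL-Complex_Analysis.Complex_Analysis" "HOL-Library.Extended_Real"
begin

text \<open>Points of the extended plane: None = infinity, Some c = the finite point c.\<close>

definition apoints :: "(complex \<Rightarrow> complex) \<Rightarrow> complex option \<Rightarrow> complex set" where
  "apoints f a = (case a of None \<Rightarrow> {z. is_pole f z}
                            | Some c \<Rightarrow> {z. \<not> is_pole f z \<and> f z = c})"

definition amult :: "(complex \<Rightarrow> complex) \<Rightarrow> complex option \<Rightarrow> complex \<Rightarrow> nat" where
  "amult f a z = (case a of None \<Rightarrow> nat (- zorder f z)
                            | Some c \<Rightarrow> nat (zorder (\<lambda>w. f w - c) z))"

definition ncount :: "(complex \<Rightarrow> complex) \<Rightarrow> complex option \<Rightarrow> real \<Rightarrow> real" where
  "ncount f a r = real (\<Sum>z\<in>{z\<in>apoints f a. cmod z \<le> r}. amult f a z)"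

definition Ncount :: "(complex \<Rightarrow> complex) \<Rightarrow> complex option \<Rightarrow> real \<Rightarrow> real" where
  "Ncount f a r = integral {0..r} (\<lambda>t. (ncount f a t - ncount f a 0) / t)
                  + ncount f a 0 * ln r"

definition ln_plus :: "real \<Rightarrow> real" where
  "ln_plus x = (if x \<le> 1 then 0 else ln x)"

definition mprox :: "(complex \<Rightarrow> complex) \<Rightarrow> real \<Rightarrow> real" where
  "mprox f r = integral {0..2*pi} (\<lambda>\<theta>. ln_plus (cmod (f (of_real r * cis \<theta>)))) / (2*pi)"

definition nev_T :: "(complex \<Rightarrow> complex) \<Rightarrow> real \<Rightarrow> real" where
  "nev_T f r = mprox f r + Ncount f None r"

definition eln :: "real \<Rightarrow> ereal" where
  "eln x = (if x > 0 then ereal (ln x) else -\<infinity>)"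

definition rho_phi :: "(real \<Rightarrow> real) \<Rightarrow> (real \<Rightarrow> real) \<Rightarrow> ereal" where
  "rho_phi \<phi> g = Limsup at_top (\<lambda>r. eln (g r) / ereal (ln (\<phi> r)))"

definition alpha_phi_s :: "(real \<Rightarrow> real) \<Rightarrow> (real \<Rightarrow> real) \<Rightarrow> ereal" where
  "alpha_phi_s \<phi> s = Liminf at_top (\<lambda>r. ereal (ln (\<phi> r) / ln (\<phi> (s r))))"

definition beta_phi :: "(real \<Rightarrow> real) \<Rightarrow> ereal" where
  "beta_phi \<phi> = Limsup at_top (\<lambda>r. ereal (ln (ln r) / ln (\<phi> r)))"

definition gamma_phi_s :: "(real \<Rightarrow> real) \<Rightarrow> (real \<Rightarrow> real) \<Rightarrow> ereal" where
  "gamma_phi_s \<phi> s = Liminf at_top (\<lambda>r. ereal (ln (ln (s r / r)) / ln (\<phi> r)))"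

end

theory Submission
  imports Defs
begin

text \<open>
  Since N(R) is the sum of m(z) ln (R / |z|) over the a-points 0 < |z| \<le> R plus n(0) ln R,
  the counting functions satisfy N(R) \<le> n(R) ln R + K for R \<ge> 1, and n(r) ln (s(r) / r) \<le> N(s(r)).
  After taking logarithms and dividing by ln \<phi>, the first gives \<rho>(N) \<le> \<rho>(n) + \<beta>; the second reads
    ln N(s(r)) / ln \<phi>(s(r)) \<ge> (ln \<phi>(r) / ln \<phi>(s(r))) (ln n(r) / ln \<phi>(r) + ln ln (s(r) / r) / ln \<phi>(r)),
  and the upper limit of the right-hand side is at least \<alpha> (\<rho>(n) + \<gamma>).
\<close>

section \<open>Counting functions of a-points\<close>

lemma finite_apoints_cball:
  assumes f_mero: "f nicely_meromorphic_on UNIV"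
    and f_nonconst: "\<not> (\<exists>c. \<forall>z. f z = c)"
  shows "finite {z\<in>apoints f a. cmod z \<le> r}"
proof -
  have sp: "apoints f a sparse_in UNIV"
  proof (cases a)
    case None
    have "eventually (\<lambda>z. \<not>is_pole f z) (cosparse UNIV)"
      by (rule meromorphic_on_imp_not_pole_cosparse) (use f_mero in \<open>auto simp: nicely_meromorphic_on_def\<close>)
    then show ?thesis using None by (simp add: eventually_cosparse apoints_def)
  next
    case (Some c)
    have "(\<forall>x\<in>UNIV. f x = c) \<or> (\<forall>\<^sub>\<approx>x\<in>UNIV. f x \<noteq> c)"
      by (rule nicely_meromorphic_imp_constant_or_avoid) (use f_mero in auto)
    with f_nonconst have "{x. \<not> f x \<noteq> c} sparse_in UNIV"
      by (auto simp: eventually_cosparse)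
    then show ?thesis using Some
      by (elim sparse_in_subset2) (auto simp: apoints_def)
  qed
  have "finite (cball 0 r \<inter> apoints f a)"
    by (rule sparse_in_compact_finite) (use sparse_in_subset[OF sp] in auto)
  moreover have "{z\<in>apoints f a. cmod z \<le> r} = cball 0 r \<inter> apoints f a" by auto
  ultimately show ?thesis by simp
qed

lemma has_integral_inverse_restrict:
  fixes c R :: real
  assumes "0 < c" and "c \<le> R"
  shows "((\<lambda>t. if t \<in> {c..R} then 1 / t else 0) has_integral ln (R / c)) {0..R}"
proof -
  have "((\<lambda>t. 1 / t) has_integral (ln R - ln c)) {c..R}"
  proof (rule fundamental_theorem_of_calculus)
    fix x assume "x \<in> {c..R}"
    then have "0 < x" using assms by auto
    then show "(ln has_vector_derivative 1 / x) (at x within {c..R})"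
      by (auto intro!: derivative_eq_intros simp flip: has_real_derivative_iff_has_vector_derivative)
  qed (use assms in simp)
  then show ?thesis
    using has_integral_restrict_closed_subinterval[of "\<lambda>t. 1 / t" "ln R - ln c" c R 0 R] assms
    by (simp add: ln_div)
qed

lemma ncount_nonneg: "0 \<le> ncount f a r"
  unfolding ncount_def by (rule of_nat_0_le_iff)

lemma ncount_in_Nats: "ncount f a r \<in> \<nat>"
  unfolding ncount_def by (rule of_nat_in_Nats)

context
  fixes f :: "complex \<Rightarrow> complex" and a :: "complex option"
  assumes finite_apoints: "\<And>r. finite {z\<in>apoints f a. cmod z \<le> r}"
begin

lemma ncount_mono: "t \<le> R \<Longrightarrow> ncount f a t \<le> ncount f a R"
  unfolding ncount_def of_nat_le_iff by (rule sum_mono2[OF finite_apoints]) auto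

lemma ncount_eq_sum_nonzero:
  assumes "0 \<le> t"
  shows "ncount f a t = (\<Sum>z\<in>{z\<in>apoints f a. cmod z \<le> t} - {0}. real (amult f a z)) + ncount f a 0"
proof -
  have "{z\<in>apoints f a. cmod z \<le> t} \<inter> {0} = {z\<in>apoints f a. cmod z \<le> 0}"
    using assms by auto
  then show ?thesis
    unfolding ncount_def of_nat_sum
    using sum.Int_Diff[OF finite_apoints, of "\<lambda>z. real (amult f a z)" t "{0}"] by simp
qed

lemma ncount_quotient_eq_sum:
  assumes t: "t \<in> {0..R}"
  shows "(ncount f a t - ncount f a 0) / t
    = (\<Sum>z\<in>{z\<in>apoints f a. cmod z \<le> R} - {0}. real (amult f a z) * (if t \<in> {cmod z..R} then 1 / t else 0))"
    (is "_ = (\<Sum>z\<in>?S. _)")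
proof (cases "t = 0")
  case False
  then have "0 < t" using t by auto
  have "ncount f a t - ncount f a 0 = (\<Sum>z\<in>{z\<in>apoints f a. cmod z \<le> t} - {0}. real (amult f a z))"
    using ncount_eq_sum_nonzero[of t] \<open>0 < t\<close> by simp
  also have "{z\<in>apoints f a. cmod z \<le> t} - {0} = {z\<in>?S. cmod z \<le> t}"
    using t by auto
  also have "(\<Sum>z\<in>{z\<in>?S. cmod z \<le> t}. real (amult f a z))
      = (\<Sum>z\<in>?S. if cmod z \<le> t then real (amult f a z) else 0)"
    by (rule sum.inter_filter) (use finite_apoints in simp)
  finally have "(ncount f a t - ncount f a 0) / t
      = (\<Sum>z\<in>?S. if cmod z \<le> t then real (amult f a z) else 0) / t"
    by simp
  also have "\<dots> = (\<Sum>z\<in>?S. real (amult f a z) * (if t \<in> {cmod z..R} then 1 / t else 0))"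
    unfolding sum_divide_distrib using t by (intro sum.cong) auto
  finally show ?thesis .
qed simp

lemma has_integral_ncount_quotient:
  assumes "0 < R"
  shows "((\<lambda>t. (ncount f a t - ncount f a 0) / t) has_integral
      (\<Sum>z\<in>{z\<in>apoints f a. cmod z \<le> R} - {0}. real (amult f a z) * ln (R / cmod z))) {0..R}"
proof -
  have "((\<lambda>t. \<Sum>z\<in>{z\<in>apoints f a. cmod z \<le> R} - {0}.
           real (amult f a z) * (if t \<in> {cmod z..R} then 1 / t else 0)) has_integral
      (\<Sum>z\<in>{z\<in>apoints f a. cmod z \<le> R} - {0}. real (amult f a z) * ln (R / cmod z))) {0..R}"
    using finite_apoints
    by (intro has_integral_sum has_integral_mult_right has_integral_inverse_restrict) auto
  then show ?thesis
    by (rule has_integral_eq[rotated]) (rule ncount_quotient_eq_sum[symmetric])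
qed

lemma Ncount_eq_sum:
  assumes R: "R > 0"
  shows "Ncount f a R = (\<Sum>z\<in>{z\<in>apoints f a. cmod z \<le> R} - {0}. real (amult f a z) * ln (R / cmod z))
            + ncount f a 0 * ln R"
  unfolding Ncount_def using integral_unique[OF has_integral_ncount_quotient[OF R]] by simp

lemma ncount_mult_ln_le_Ncount:
  assumes r: "1 \<le> r" "r \<le> R"
  shows "ncount f a r * ln (R / r) \<le> Ncount f a R"
proof -
  have R: "R > 0" using r by auto
  have "ncount f a r * ln (R / r) = (\<Sum>z\<in>{z\<in>apoints f a. cmod z \<le> r} - {0}. real (amult f a z) * ln (R / r))
        + ncount f a 0 * ln (R / r)"
    using ncount_eq_sum_nonzero[of r] r by (simp add: sum_distrib_right sum_distrib_left algebra_simps)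
  also have "\<dots> \<le> (\<Sum>z\<in>{z\<in>apoints f a. cmod z \<le> r} - {0}. real (amult f a z) * ln (R / cmod z))
        + ncount f a 0 * ln R"
  proof (intro add_mono sum_mono mult_left_mono)
    fix z assume "z \<in> {z\<in>apoints f a. cmod z \<le> r} - {0}"
    then have "cmod z > 0" "cmod z \<le> r" by auto
    then show "ln (R / r) \<le> ln (R / cmod z)" using R r by (simp add: frac_le)
  next
    show "ln (R / r) \<le> ln R" using R r by (simp add: ln_div)
  qed (auto simp: ncount_nonneg)
  also have "\<dots> \<le> (\<Sum>z\<in>{z\<in>apoints f a. cmod z \<le> R} - {0}. real (amult f a z) * ln (R / cmod z))
        + ncount f a 0 * ln R"
  proof (intro add_mono order.refl sum_mono2)
    show "finite ({z \<in> apoints f a. cmod z \<le> R} - {0})" using finite_apoints by simp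
    show "{z \<in> apoints f a. cmod z \<le> r} - {0} \<subseteq> {z \<in> apoints f a. cmod z \<le> R} - {0}" using r by auto
    fix z assume "z \<in> {z \<in> apoints f a. cmod z \<le> R} - {0} - ({z \<in> apoints f a. cmod z \<le> r} - {0})"
    then have "cmod z > 0" "cmod z \<le> R" by auto
    then show "0 \<le> real (amult f a z) * ln (R / cmod z)" by (intro mult_nonneg_nonneg) auto
  qed
  also have "\<dots> = Ncount f a R" using Ncount_eq_sum[OF R] by simp
  finally show ?thesis .
qed

lemma Ncount_le_ncount_mult_ln_plus_const:
  obtains K where "\<And>R. 1 \<le> R \<Longrightarrow> Ncount f a R \<le> ncount f a R * ln R + K"
proof -
  let ?g = "\<lambda>z. real (amult f a z) * max 0 (- ln (cmod z))"
  have "Ncount f a R \<le> ncount f a R * ln R + (\<Sum>z\<in>{z\<in>apoints f a. cmod z \<le> 1} - {0}. ?g z)"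
    if R: "1 \<le> R" for R
  proof -
    have "Ncount f a R = (\<Sum>z\<in>{z\<in>apoints f a. cmod z \<le> R} - {0}. real (amult f a z) * ln (R / cmod z))
              + ncount f a 0 * ln R" using Ncount_eq_sum[of R] R by simp
    also have "\<dots> \<le> (\<Sum>z\<in>{z\<in>apoints f a. cmod z \<le> R} - {0}. real (amult f a z) * ln R + ?g z)
              + ncount f a 0 * ln R"
    proof (intro add_mono order.refl sum_mono)
      fix z assume "z \<in> {z\<in>apoints f a. cmod z \<le> R} - {0}"
      then have "ln (R / cmod z) = ln R - ln (cmod z)" using R by (simp add: ln_div)
      also have "\<dots> \<le> ln R + max 0 (- ln (cmod z))" by simp
      finally show "real (amult f a z) * ln (R / cmod z) \<le> real (amult f a z) * ln R + ?g z"
        by (simp add: distrib_left[symmetric] mult_left_mono)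
    qed
    also have "(\<Sum>z\<in>{z\<in>apoints f a. cmod z \<le> R} - {0}. ?g z)
         = (\<Sum>z\<in>{z\<in>apoints f a. cmod z \<le> 1} - {0}. ?g z)"
      by (rule sum.mono_neutral_right)
        (use R finite_apoints in \<open>auto simp: max_def not_le\<close>)
    then have "(\<Sum>z\<in>{z\<in>apoints f a. cmod z \<le> R} - {0}. real (amult f a z) * ln R + ?g z)
          + ncount f a 0 * ln R = ncount f a R * ln R + (\<Sum>z\<in>{z\<in>apoints f a. cmod z \<le> 1} - {0}. ?g z)"
      using ncount_eq_sum_nonzero[of R] R
      by (simp add: sum.distrib sum_distrib_right sum_distrib_left algebra_simps)
    finally show ?thesis .
  qed
  then show ?thesis by (rule that)
qed

lemma Ncount_eq_0_if_ncount_eq_0: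
  assumes "ncount f a R = 0" and "0 < R"
  shows "Ncount f a R = 0"
proof -
  have "(\<Sum>z\<in>{z\<in>apoints f a. cmod z \<le> R}. amult f a z) = 0"
    using assms(1) unfolding ncount_def by (simp only: of_nat_eq_0_iff)
  then have "\<forall>z\<in>{z\<in>apoints f a. cmod z \<le> R}. amult f a z = 0"
    using finite_apoints[of R] by simp
  moreover have "ncount f a 0 = 0"
    using ncount_mono[of 0 R] ncount_nonneg[of f a 0] assms by simp
  ultimately show ?thesis
    using Ncount_eq_sum[OF assms(2)] by simp
qed

lemma eventually_ncount_Ncount_ge_1:
  assumes "ncount f a r1 \<noteq> 0"
  shows "eventually (\<lambda>r. 1 \<le> ncount f a r \<and> 1 \<le> Ncount f a r) at_top"
proof -
  define r2 where "r2 = max r1 1"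
  have n_ge_1: "1 \<le> ncount f a r" if "r2 \<le> r" for r
  proof -
    have "0 < ncount f a r1" using assms ncount_nonneg[of f a r1] by simp
    also have "\<dots> \<le> ncount f a r" using that by (intro ncount_mono) (simp add: r2_def)
    finally show ?thesis
      using ncount_in_Nats[of f a r] by (auto elim: Nats_cases)
  qed
  have "1 \<le> Ncount f a r" if r: "exp 1 * r2 \<le> r" for r
  proof -
    have "1 \<le> r2" by (simp add: r2_def)
    then have "r2 \<le> exp 1 * r2"
      using exp_ge_add_one_self[of 1] mult_right_mono[of 1 "exp 1" r2] by simp
    with r \<open>1 \<le> r2\<close> have r2: "1 \<le> r2" "r2 \<le> r" by linarith+
    have "exp 1 \<le> r / r2" using r r2 by (simp add: le_divide_eq mult.commute)
    then have "1 \<le> ln (r / r2)" using r2 by (simp add: ln_ge_iff)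
    then have "1 \<le> ncount f a r2 * ln (r / r2)"
      using n_ge_1[of r2] mult_mono[of 1 "ncount f a r2" 1 "ln (r / r2)"] by simp
    also have "\<dots> \<le> Ncount f a r" by (rule ncount_mult_ln_le_Ncount[OF r2])
    finally show ?thesis .
  qed
  then show ?thesis
    using n_ge_1 eventually_ge_at_top[of "max r2 (exp 1 * r2)"] by (auto elim: eventually_mono)
qed

end

section \<open>Upper and lower limits of real functions\<close>

lemma Limsup_add_le:
  fixes u v :: "'a \<Rightarrow> real"
  assumes "F \<noteq> bot" and "Limsup F (\<lambda>x. ereal (v x)) \<le> ereal b"
  shows "Limsup F (\<lambda>x. ereal (u x + v x)) \<le> Limsup F (\<lambda>x. ereal (u x)) + ereal b"
proof (rule ereal_le_epsilon2)
  fix e :: real assume "0 < e"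
  have "Limsup F (\<lambda>x. ereal (v x)) < ereal (b + e)"
    by (rule le_less_trans[OF assms(2)]) (use \<open>0 < e\<close> in simp)
  then have "eventually (\<lambda>x. v x < b + e) F"
    by (auto dest: Limsup_lessD)
  then have "Limsup F (\<lambda>x. ereal (u x + v x)) \<le> Limsup F (\<lambda>x. ereal (u x) + ereal (b + e))"
    by (intro Limsup_mono) (auto elim: eventually_mono)
  also have "\<dots> = Limsup F (\<lambda>x. ereal (u x)) + ereal (b + e)"
    by (rule Limsup_add_ereal_right[OF assms(1)]) simp
  also have "\<dots> = Limsup F (\<lambda>x. ereal (u x)) + ereal b + ereal e"
    by (simp add: add.assoc)
  finally show "Limsup F (\<lambda>x. ereal (u x + v x)) \<le> Limsup F (\<lambda>x. ereal (u x)) + ereal b + ereal e" .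
qed

lemma Limsup_add_Liminf_le:
  fixes u v :: "'a \<Rightarrow> real"
  assumes "F \<noteq> bot" and "ereal g \<le> Liminf F (\<lambda>x. ereal (v x))"
  shows "Limsup F (\<lambda>x. ereal (u x)) + ereal g \<le> Limsup F (\<lambda>x. ereal (u x + v x))"
proof (rule ereal_le_epsilon2)
  fix e :: real assume "0 < e"
  have "ereal (g - e) < Liminf F (\<lambda>x. ereal (v x))"
    by (rule less_le_trans[OF _ assms(2)]) (use \<open>0 < e\<close> in simp)
  then have "eventually (\<lambda>x. g - e < v x) F"
    by (auto dest: less_LiminfD)
  have "Limsup F (\<lambda>x. ereal (u x)) + ereal g = Limsup F (\<lambda>x. ereal (u x)) + ereal (g - e) + ereal e"
    by (simp add: add.assoc)
  also have "\<dots> = Limsup F (\<lambda>x. ereal (u x) + ereal (g - e)) + ereal e"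
    by (subst Limsup_add_ereal_right[OF assms(1)]) simp_all
  also have "\<dots> \<le> Limsup F (\<lambda>x. ereal (u x + v x)) + ereal e"
    using \<open>eventually (\<lambda>x. g - e < v x) F\<close>
    by (intro add_right_mono Limsup_mono) (auto elim: eventually_mono)
  finally show "Limsup F (\<lambda>x. ereal (u x)) + ereal g \<le> Limsup F (\<lambda>x. ereal (u x + v x)) + ereal e" .
qed

lemma Limsup_compose_filterlim_le:
  fixes h :: "'b \<Rightarrow> 'c :: complete_linorder"
  assumes "filterlim s F G"
  shows "Limsup G (\<lambda>x. h (s x)) \<le> Limsup F h"
proof (subst Limsup_le_iff, intro allI impI)
  fix y assume "Limsup F h < y"
  then have "eventually (\<lambda>x. h x < y) F" by (rule Limsup_lessD)
  then show "eventually (\<lambda>x. h (s x) < y) G" using assms by (rule eventually_compose_filterlim)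
qed

lemma const_mult_Limsup_le:
  fixes x z :: "'a \<Rightarrow> real"
  assumes F: "F \<noteq> bot" and c: "0 \<le> c" and ev: "eventually (\<lambda>r. 0 \<le> z r \<and> c * x r \<le> z r) F"
  shows "ereal c * Limsup F (\<lambda>r. ereal (x r)) \<le> Limsup F (\<lambda>r. ereal (z r))"
proof -
  have "ereal c * Limsup F (\<lambda>r. ereal (x r)) \<le> ereal c * Limsup F (\<lambda>r. ereal (max (x r) 0))"
    using c by (intro ereal_mult_left_mono Limsup_mono) auto
  also have "\<dots> = Limsup F (\<lambda>r. ereal c * ereal (max (x r) 0))"
    by (rule Limsup_ereal_mult_left[symmetric, OF F c])
  also have "\<dots> \<le> Limsup F (\<lambda>r. ereal (z r))"
    using ev by (intro Limsup_mono) (auto simp: max_def elim: eventually_mono)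
  finally show ?thesis .
qed

lemma ereal_mult_le_if_const_mult_le:
  fixes W X Z :: ereal
  assumes W: "0 \<le> W" and Z: "0 \<le> Z" and c_bound: "\<And>c. 0 \<le> c \<Longrightarrow> ereal c < W \<Longrightarrow> ereal c * X \<le> Z"
  shows "W * X \<le> Z"
proof (cases "X \<le> 0")
  case True
  then have "W * X \<le> 0" using W by (simp add: ereal_mult_le_0_iff)
  then show ?thesis using Z by (rule order_trans)
next
  case False
  then have "0 < X" by simp
  with ereal_dense2[of 0 X] obtain e where e: "0 < e" "ereal e < X" by auto
  show ?thesis
  proof (cases W)
    case (real w)
    show ?thesis
    proof (rule ereal_le_mult_one_interval)
      fix t' :: ereal assume "0 < t'" "t' < 1"
      then obtain t where t: "t' = ereal t" "0 < t" "t < 1" by (cases t') auto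
      have "ereal t * (W * X) = ereal (t * w) * X" using real by (simp flip: mult.assoc)
      also have "\<dots> \<le> Z"
      proof (cases "w = 0")
        case False
        then show ?thesis using t real W by (intro c_bound) (auto simp: mult_less_cancel_right1)
      qed (use Z in \<open>simp add: zero_ereal_def[symmetric]\<close>)
      finally show "t' * (W * X) \<le> Z" using t(1) by simp
    qed (use Z in auto)
  next
    case PInf
    have "Z = \<infinity>"
    proof (rule ereal_top)
      fix B
      have "ereal B \<le> ereal (max B 0 / e) * ereal e"
        using e by simp
      also have "\<dots> \<le> ereal (max B 0 / e) * X"
        using e by (intro ereal_mult_left_mono) auto
      also have "\<dots> \<le> Z" using PInf e by (intro c_bound) auto
      finally show "ereal B \<le> Z" .
    qed
    then show ?thesis by simp
  qed (use W in simp)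
qed

lemma Liminf_mult_Limsup_le:
  fixes w x z :: "'a \<Rightarrow> real"
  assumes F: "F \<noteq> bot" and ev: "eventually (\<lambda>r. 0 \<le> w r \<and> 0 \<le> z r \<and> w r * x r \<le> z r) F"
  shows "Liminf F (\<lambda>r. ereal (w r)) * Limsup F (\<lambda>r. ereal (x r)) \<le> Limsup F (\<lambda>r. ereal (z r))"
proof (rule ereal_mult_le_if_const_mult_le)
  show "0 \<le> Liminf F (\<lambda>r. ereal (w r))" "0 \<le> Limsup F (\<lambda>r. ereal (z r))"
    using ev by (auto intro!: Liminf_bounded le_Limsup[OF F] elim: eventually_mono)
  fix c assume c: "0 \<le> c" "ereal c < Liminf F (\<lambda>r. ereal (w r))"
  show "ereal c * Limsup F (\<lambda>r. ereal (x r)) \<le> Limsup F (\<lambda>r. ereal (z r))"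
  proof (rule const_mult_Limsup_le[OF F c(1)])
    have "eventually (\<lambda>r. c < w r) F"
      using less_LiminfD[OF c(2)] by simp
    with ev show "eventually (\<lambda>r. 0 \<le> z r \<and> c * x r \<le> z r) F"
    proof eventually_elim
      case (elim r)
      show ?case
      proof (cases "0 \<le> x r")
        case True
        then have "c * x r \<le> w r * x r" using elim by (intro mult_right_mono) auto
        then show ?thesis using elim by simp
      next
        case False
        then have "c * x r \<le> 0" using c(1) by (simp add: mult_nonneg_nonpos)
        then show ?thesis using elim by simp
      qed
    qed
  qed
qed

lemma Liminf_mult_Limsup_add_Liminf_le:
  fixes w u v z :: "'a \<Rightarrow> real"
  assumes F: "F \<noteq> bot"
    and ev: "eventually (\<lambda>r. 0 \<le> w r \<and> 0 \<le> z r \<and> w r * (u r + v r) \<le> z r) F"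
    and w: "Liminf F (\<lambda>r. ereal (w r)) = ereal a" and v: "ereal g \<le> Liminf F (\<lambda>r. ereal (v r))"
  shows "Liminf F (\<lambda>r. ereal (w r)) * Limsup F (\<lambda>r. ereal (u r)) + Liminf F (\<lambda>r. ereal (w r)) * ereal g
    \<le> Limsup F (\<lambda>r. ereal (z r))"
proof -
  have "0 \<le> Liminf F (\<lambda>r. ereal (w r))"
    by (rule Liminf_bounded) (use ev in \<open>auto elim: eventually_mono\<close>)
  have "ereal a * Limsup F (\<lambda>r. ereal (u r)) + ereal a * ereal g
      = ereal a * (Limsup F (\<lambda>r. ereal (u r)) + ereal g)"
    by (subst ereal_distrib_left) simp_all
  also have "\<dots> \<le> ereal a * Limsup F (\<lambda>r. ereal (u r + v r))"
    using \<open>0 \<le> Liminf F _\<close> w by (intro ereal_mult_left_mono Limsup_add_Liminf_le[OF F v]) simp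
  also have "\<dots> \<le> Limsup F (\<lambda>r. ereal (z r))"
    unfolding w[symmetric] by (rule Liminf_mult_Limsup_le[OF F ev])
  finally show ?thesis unfolding w .
qed

lemma Limsup_real_boundedE:
  fixes g :: "'a \<Rightarrow> real"
  assumes "F \<noteq> bot" and "eventually (\<lambda>x. a \<le> g x \<and> g x \<le> b) F"
  obtains c where "Limsup F (\<lambda>x. ereal (g x)) = ereal c"
proof -
  have "ereal a \<le> Limsup F (\<lambda>x. ereal (g x))" "Limsup F (\<lambda>x. ereal (g x)) \<le> ereal b"
    using assms by (auto intro!: le_Limsup Limsup_bounded elim: eventually_mono)
  then show ?thesis using that by (cases "Limsup F (\<lambda>x. ereal (g x))") auto
qed

lemma Liminf_real_boundedE:
  fixes g :: "'a \<Rightarrow> real"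
  assumes "F \<noteq> bot" and "eventually (\<lambda>x. a \<le> g x \<and> g x \<le> b) F"
  obtains c where "Liminf F (\<lambda>x. ereal (g x)) = ereal c"
proof -
  have "ereal a \<le> Liminf F (\<lambda>x. ereal (g x))" "Liminf F (\<lambda>x. ereal (g x)) \<le> ereal b"
    using assms by (auto intro!: Liminf_bounded Liminf_le elim: eventually_mono)
  then show ?thesis using that by (cases "Liminf F (\<lambda>x. ereal (g x))") auto
qed

section \<open>The \<phi>-order\<close>

lemma filterlim_at_top_if_mono_on_unbounded:
  fixes \<phi> :: "real \<Rightarrow> real"
  assumes mono: "mono_on {R0<..} \<phi>" and unbdd: "\<not> bdd_above (\<phi> ` {R0<..})"
  shows "filterlim \<phi> at_top at_top"
proof (subst filterlim_at_top, intro allI)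
  fix Z
  obtain r0 where r0: "r0 > R0" "\<phi> r0 > Z"
    using unbdd by (auto simp: bdd_above_def not_le)
  show "eventually (\<lambda>r. Z \<le> \<phi> r) at_top"
    using eventually_ge_at_top[of r0]
  proof eventually_elim
    case (elim r)
    then have "\<phi> r0 \<le> \<phi> r" using mono r0 by (auto intro: mono_onD)
    then show ?case using r0 by simp
  qed
qed

lemma rho_phi_eq_Limsup:
  assumes "eventually (\<lambda>r. 0 < g r \<and> 1 < \<phi> r) at_top"
  shows "rho_phi \<phi> g = Limsup at_top (\<lambda>r. ereal (ln (g r) / ln (\<phi> r)))"
  unfolding rho_phi_def
  by (rule Limsup_eq) (use assms in \<open>eventually_elim, simp add: eln_def\<close>)

lemma rho_phi_eq_MInfty:
  assumes "eventually (\<lambda>r. g r = 0 \<and> 1 < \<phi> r) at_top"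
  shows "rho_phi \<phi> g = -\<infinity>"
proof -
  have "eventually (\<lambda>r. eln (g r) / ereal (ln (\<phi> r)) = -\<infinity>) at_top"
    using assms by eventually_elim (simp add: eln_def)
  then have "rho_phi \<phi> g = Limsup at_top (\<lambda>_::real. -\<infinity>)"
    unfolding rho_phi_def by (rule Limsup_eq)
  then show ?thesis by (simp add: Limsup_const)
qed

lemma rho_phi_nonneg:
  assumes "eventually (\<lambda>r. 1 \<le> g r \<and> 1 < \<phi> r) at_top"
  shows "0 \<le> rho_phi \<phi> g"
proof -
  have "rho_phi \<phi> g = Limsup at_top (\<lambda>r. ereal (ln (g r) / ln (\<phi> r)))"
    by (rule rho_phi_eq_Limsup) (use assms in \<open>auto elim: eventually_mono\<close>)
  also have "0 \<le> \<dots>"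
    by (rule le_Limsup) (use assms in \<open>auto elim: eventually_mono\<close>)
  finally show ?thesis .
qed

lemma beta_phi_finite:
  assumes "eventually (\<lambda>r. ln r \<le> \<phi> r) at_top"
  obtains b where "beta_phi \<phi> = ereal b"
proof -
  have "eventually (\<lambda>r. 0 \<le> ln (ln r) / ln (\<phi> r) \<and> ln (ln r) / ln (\<phi> r) \<le> 1) at_top"
    using assms eventually_ge_at_top[of "exp 1"]
  proof eventually_elim
    case (elim r)
    then have "1 \<le> ln r" by (metis exp_gt_zero ln_exp ln_le_cancel_iff order_less_le_trans)
    with elim have "0 \<le> ln (ln r)" "ln (ln r) \<le> ln (\<phi> r)" by auto
    then show ?case by (auto simp: divide_le_eq_1)
  qed
  then obtain b where "Limsup at_top (\<lambda>r. ereal (ln (ln r) / ln (\<phi> r))) = ereal b"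
    by (rule Limsup_real_boundedE[OF trivial_limit_at_top_linorder])
  then show ?thesis using that unfolding beta_phi_def by blast
qed

lemma gamma_phi_s_finite:
  fixes \<phi> s :: "real \<Rightarrow> real"
  assumes \<phi>: "filterlim \<phi> at_top at_top"
    and ev: "eventually (\<lambda>r. ln r \<le> \<phi> r \<and> r < s r \<and> s r \<le> r\<^sup>2) at_top"
    and s: "1 < Liminf at_top (\<lambda>r. ereal (s r / r))"
  obtains g where "gamma_phi_s \<phi> s = ereal g"
proof -
  obtain c where c: "1 < c" "ereal c < Liminf at_top (\<lambda>r. ereal (s r / r))"
    using ereal_dense2[OF s] by (auto simp: one_ereal_def)
  have "eventually (\<lambda>r. c < s r / r) at_top"
    using less_LiminfD[OF c(2)] by simp
  moreover have "eventually (\<lambda>r. exp 1 \<le> r \<and> exp 1 \<le> \<phi> r) at_top"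
    using eventually_ge_at_top[of "exp 1"] \<phi>[unfolded filterlim_at_top] by (auto intro: eventually_conj)
  ultimately have "eventually (\<lambda>r. - \<bar>ln (ln c)\<bar> \<le> ln (ln (s r / r)) / ln (\<phi> r)
                     \<and> ln (ln (s r / r)) / ln (\<phi> r) \<le> 1) at_top"
    using ev
  proof eventually_elim
    case (elim r)
    have r: "0 < r" "1 \<le> ln r" "1 \<le> ln (\<phi> r)"
      using elim by (auto simp: ln_ge_iff order_less_le_trans[OF exp_gt_zero])
    have "ln (ln c) \<le> ln (ln (s r / r))"
      using elim c by simp
    then have "- \<bar>ln (ln c)\<bar> / ln (\<phi> r) \<le> ln (ln (s r / r)) / ln (\<phi> r)"
      using r by (intro divide_right_mono) auto
    moreover have "- \<bar>ln (ln c)\<bar> \<le> - \<bar>ln (ln c)\<bar> / ln (\<phi> r)"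
      using r by (simp add: divide_le_eq mult_le_cancel_left1)
    moreover have "ln (ln (s r / r)) \<le> ln (\<phi> r)"
    proof -
      have "s r / r \<le> r" using elim r by (simp add: divide_le_eq power2_eq_square)
      then have "ln (s r / r) \<le> ln r" using elim r c by simp
      then have "ln (s r / r) \<le> \<phi> r" using elim by linarith
      moreover have "0 < ln (s r / r)" using elim c by simp
      ultimately show ?thesis by simp
    qed
    ultimately show ?case using r by (auto simp: divide_le_eq_1)
  qed
  then obtain g where "Liminf at_top (\<lambda>r. ereal (ln (ln (s r / r)) / ln (\<phi> r))) = ereal g"
    by (rule Liminf_real_boundedE[OF trivial_limit_at_top_linorder])
  then show ?thesis using that unfolding gamma_phi_s_def by blast
qed

lemma ln_le_ln_mult_ln_add_const:
  fixes n N r K :: real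
  assumes "1 \<le> n" "1 \<le> N" "exp 1 \<le> r" "N \<le> n * ln r + K"
  shows "ln N \<le> ln n + ln (ln r) + ln (1 + \<bar>K\<bar>)"
proof -
  have "1 \<le> ln r"
    using assms(3) by (metis exp_gt_zero ln_exp ln_le_cancel_iff order_less_le_trans)
  with assms(1) have nl: "1 \<le> n * ln r" using mult_mono[of 1 n 1 "ln r"] by simp
  have "N \<le> n * ln r + n * ln r * \<bar>K\<bar>"
    using assms(4) nl mult_right_mono[OF nl, of "\<bar>K\<bar>"] by linarith
  then have "ln N \<le> ln (n * ln r * (1 + \<bar>K\<bar>))"
    using assms(2) by (simp add: algebra_simps)
  also have "\<dots> = ln n + ln (ln r) + ln (1 + \<bar>K\<bar>)"
    using assms(1) \<open>1 \<le> ln r\<close> by (simp add: ln_mult)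
  finally show ?thesis .
qed

lemma rho_phi_le_add_beta_phi:
  fixes n N \<phi> :: "real \<Rightarrow> real" and K :: real
  assumes \<phi>: "filterlim \<phi> at_top at_top" and b: "beta_phi \<phi> = ereal b"
    and ev: "eventually (\<lambda>r. 1 \<le> n r \<and> 1 \<le> N r \<and> N r \<le> n r * ln r + K) at_top"
  shows "rho_phi \<phi> N \<le> rho_phi \<phi> n + beta_phi \<phi>"
proof -
  define L where "L r = ln (\<phi> r)" for r
  define C where "C = ln (1 + \<bar>K\<bar>)"
  have L: "filterlim L at_top at_top"
    unfolding L_def by (rule filterlim_compose[OF ln_at_top \<phi>])
  have ev_\<phi>: "eventually (\<lambda>r. 1 < \<phi> r) at_top"
    using \<phi> by (simp add: filterlim_at_top_dense)
  have "eventually (\<lambda>r. ln (N r) / L r \<le> ln (n r) / L r + (ln (ln r) / L r + C / L r)) at_top"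
    using ev ev_\<phi> eventually_ge_at_top[of "exp 1"]
  proof eventually_elim
    case (elim r)
    then have "ln (N r) \<le> ln (n r) + ln (ln r) + C"
      unfolding C_def by (intro ln_le_ln_mult_ln_add_const) auto
    then show ?case
      using elim by (simp add: L_def divide_right_mono flip: add_divide_distrib)
  qed
  moreover have "eventually (\<lambda>r. 0 < N r \<and> 1 < \<phi> r) at_top"
    using ev ev_\<phi> by eventually_elim auto
  then have "rho_phi \<phi> N = Limsup at_top (\<lambda>r. ereal (ln (N r) / L r))"
    unfolding L_def by (rule rho_phi_eq_Limsup)
  ultimately have "rho_phi \<phi> N \<le> Limsup at_top (\<lambda>r. ereal (ln (n r) / L r + (ln (ln r) / L r + C / L r)))"
    by (auto intro: Limsup_mono elim: eventually_mono)
  also have "\<dots> \<le> Limsup at_top (\<lambda>r. ereal (ln (n r) / L r)) + ereal b"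
  proof (rule Limsup_add_le)
    have "((\<lambda>r. C / L r) \<longlongrightarrow> 0) at_top"
      by (rule tendsto_divide_0[OF tendsto_const filterlim_at_top_imp_at_infinity[OF L]])
    then have "Limsup at_top (\<lambda>r. ereal (C / L r)) = 0"
      by (intro lim_imp_Limsup) (auto simp: zero_ereal_def)
    then have "Limsup at_top (\<lambda>r. ereal (ln (ln r) / L r + C / L r)) \<le> beta_phi \<phi> + ereal 0"
      unfolding beta_phi_def L_def by (intro Limsup_add_le) simp_all
    then show "Limsup at_top (\<lambda>r. ereal (ln (ln r) / L r + C / L r)) \<le> ereal b"
      using b by simp
  qed simp
  also have "Limsup at_top (\<lambda>r. ereal (ln (n r) / L r)) = rho_phi \<phi> n"
    unfolding L_def
    by (rule rho_phi_eq_Limsup[symmetric]) (use ev ev_\<phi> in \<open>eventually_elim, simp\<close>)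
  finally show ?thesis using b by simp
qed

lemma alpha_phi_s_finite:
  fixes \<phi> s :: "real \<Rightarrow> real"
  assumes \<phi>: "filterlim \<phi> at_top at_top" and ev: "eventually (\<lambda>r. \<phi> r \<le> \<phi> (s r)) at_top"
  obtains a where "alpha_phi_s \<phi> s = ereal a" and "0 \<le> a"
proof -
  have "eventually (\<lambda>r. 1 < \<phi> r) at_top"
    using \<phi> by (simp add: filterlim_at_top_dense)
  with ev have ev_bounds: "eventually (\<lambda>r. 0 \<le> ln (\<phi> r) / ln (\<phi> (s r)) \<and> ln (\<phi> r) / ln (\<phi> (s r)) \<le> 1) at_top"
    by eventually_elim (auto simp: divide_le_eq_1)
  then obtain a where a: "alpha_phi_s \<phi> s = ereal a"
    unfolding alpha_phi_s_def by (rule Liminf_real_boundedE[OF trivial_limit_at_top_linorder])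
  have "0 \<le> alpha_phi_s \<phi> s"
    unfolding alpha_phi_s_def
    by (rule Liminf_bounded) (use ev_bounds in \<open>auto elim: eventually_mono\<close>)
  with a show ?thesis using that by simp
qed

lemma rho_phi_ge_alpha_phi_s_mult:
  fixes n N \<phi> s :: "real \<Rightarrow> real"
  assumes \<phi>: "filterlim \<phi> at_top at_top" and g: "gamma_phi_s \<phi> s = ereal g"
    and ev: "eventually (\<lambda>r. r \<le> s r \<and> \<phi> r \<le> \<phi> (s r) \<and> 1 \<le> n r \<and> 1 \<le> N r
               \<and> 1 < s r / r \<and> n r * ln (s r / r) \<le> N (s r)) at_top"
  shows "alpha_phi_s \<phi> s * rho_phi \<phi> n + alpha_phi_s \<phi> s * gamma_phi_s \<phi> s \<le> rho_phi \<phi> N"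
proof -
  define L where "L r = ln (\<phi> r)" for r
  have s: "filterlim s at_top at_top"
    using ev by (intro filterlim_at_top_mono[OF filterlim_ident]) (auto elim: eventually_mono)
  have ev_\<phi>: "eventually (\<lambda>r. 1 < \<phi> r) at_top"
    using \<phi> by (simp add: filterlim_at_top_dense)
  have "eventually (\<lambda>r. 1 \<le> N r) at_top"
    using ev by (auto elim: eventually_mono)
  then have "eventually (\<lambda>r. 1 \<le> N (s r)) at_top"
    using s by (rule eventually_compose_filterlim)
  with ev ev_\<phi> have ev_bounds: "eventually (\<lambda>r. 0 \<le> L r / L (s r) \<and> 0 \<le> ln (N (s r)) / L (s r)
      \<and> L r / L (s r) * (ln (n r) / L r + ln (ln (s r / r)) / L r) \<le> ln (N (s r)) / L (s r)) at_top"
  proof eventually_elim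
    case (elim r)
    have L: "0 < L r" "L r \<le> L (s r)" using elim by (auto simp: L_def)
    have pos: "0 < n r" "0 < ln (s r / r)" using elim by (auto intro: ln_gt_zero)
    have "L r / L (s r) * (ln (n r) / L r + ln (ln (s r / r)) / L r) = ln (n r * ln (s r / r)) / L (s r)"
      using L pos by (simp add: ln_mult field_simps)
    also have "\<dots> \<le> ln (N (s r)) / L (s r)"
      using elim L by (intro divide_right_mono) auto
    finally show ?case using elim L by simp
  qed
  have alpha: "alpha_phi_s \<phi> s = Liminf at_top (\<lambda>r. ereal (L r / L (s r)))"
    by (simp add: alpha_phi_s_def L_def)
  obtain a where a: "Liminf at_top (\<lambda>r. ereal (L r / L (s r))) = ereal a"
    unfolding alpha[symmetric]
    by (rule alpha_phi_s_finite[OF \<phi>]) (use ev in \<open>auto elim: eventually_mono\<close>)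
  have "ereal g \<le> Liminf at_top (\<lambda>r. ereal (ln (ln (s r / r)) / L r))"
    using g by (simp add: gamma_phi_s_def L_def)
  moreover have "rho_phi \<phi> n = Limsup at_top (\<lambda>r. ereal (ln (n r) / L r))"
    unfolding L_def by (rule rho_phi_eq_Limsup) (use ev ev_\<phi> in \<open>eventually_elim, simp\<close>)
  ultimately have "alpha_phi_s \<phi> s * rho_phi \<phi> n + alpha_phi_s \<phi> s * gamma_phi_s \<phi> s
      \<le> Limsup at_top (\<lambda>r. ereal (ln (N (s r)) / L (s r)))"
    unfolding alpha g using Liminf_mult_Limsup_add_Liminf_le[OF _ ev_bounds a] by simp
  also have "\<dots> \<le> Limsup at_top (\<lambda>r. ereal (ln (N r) / L r))"
    by (rule Limsup_compose_filterlim_le[OF s])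
  also have "\<dots> = rho_phi \<phi> N"
    unfolding L_def by (rule rho_phi_eq_Limsup[symmetric]) (use ev ev_\<phi> in \<open>eventually_elim, simp\<close>)
  finally show ?thesis .
qed

lemma rho_phi_ncount_Ncount_eq_MInfty:
  assumes fin: "\<And>r. finite {z\<in>apoints f a. cmod z \<le> r}" and \<phi>: "filterlim \<phi> at_top at_top"
    and zero: "\<And>r. ncount f a r = 0"
  shows "rho_phi \<phi> (ncount f a) = -\<infinity>" and "rho_phi \<phi> (Ncount f a) = -\<infinity>"
proof -
  have "eventually (\<lambda>r. 0 < r \<and> 1 < \<phi> r) at_top"
    using \<phi> by (intro eventually_conj eventually_gt_at_top) (simp add: filterlim_at_top_dense)
  then show "rho_phi \<phi> (ncount f a) = -\<infinity>" "rho_phi \<phi> (Ncount f a) = -\<infinity>"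
    using zero Ncount_eq_0_if_ncount_eq_0[OF fin zero]
    by (auto intro!: rho_phi_eq_MInfty elim: eventually_mono)
qed

lemma rho_phi_ncount_nonneg:
  assumes fin: "\<And>r. finite {z\<in>apoints f a. cmod z \<le> r}" and \<phi>: "filterlim \<phi> at_top at_top"
    and r1: "ncount f a r1 \<noteq> 0"
  shows "0 \<le> rho_phi \<phi> (ncount f a)"
  using eventually_ncount_Ncount_ge_1[OF fin r1] \<phi>[unfolded filterlim_at_top_dense, rule_format, of 1]
  by (intro rho_phi_nonneg) (auto elim: eventually_elim2)

lemma rho_phi_Ncount_le_add_beta_phi:
  assumes fin: "\<And>r. finite {z\<in>apoints f a. cmod z \<le> r}" and \<phi>: "filterlim \<phi> at_top at_top"
    and b: "beta_phi \<phi> = ereal b" and r1: "ncount f a r1 \<noteq> 0"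
  shows "rho_phi \<phi> (Ncount f a) \<le> rho_phi \<phi> (ncount f a) + beta_phi \<phi>"
proof -
  obtain K where K: "\<And>R. 1 \<le> R \<Longrightarrow> Ncount f a R \<le> ncount f a R * ln R + K"
    using Ncount_le_ncount_mult_ln_plus_const[OF fin] by blast
  have "eventually (\<lambda>r. 1 \<le> ncount f a r \<and> 1 \<le> Ncount f a r
      \<and> Ncount f a r \<le> ncount f a r * ln r + K) at_top"
    using eventually_ncount_Ncount_ge_1[OF fin r1] eventually_ge_at_top[of 1]
    by eventually_elim (auto intro: K)
  then show ?thesis by (rule rho_phi_le_add_beta_phi[OF \<phi> b])
qed

lemma alpha_phi_s_mult_rho_phi_le_rho_phi_Ncount:
  assumes fin: "\<And>r. finite {z\<in>apoints f a. cmod z \<le> r}" and \<phi>: "filterlim \<phi> at_top at_top"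
    and g: "gamma_phi_s \<phi> s = ereal g" and r1: "ncount f a r1 \<noteq> 0"
    and s: "eventually (\<lambda>r. r < s r \<and> \<phi> r \<le> \<phi> (s r)) at_top"
  shows "alpha_phi_s \<phi> s * rho_phi \<phi> (ncount f a) + alpha_phi_s \<phi> s * gamma_phi_s \<phi> s
    \<le> rho_phi \<phi> (Ncount f a)"
proof (rule rho_phi_ge_alpha_phi_s_mult[OF \<phi> g])
  show "eventually (\<lambda>r. r \<le> s r \<and> \<phi> r \<le> \<phi> (s r) \<and> 1 \<le> ncount f a r \<and> 1 \<le> Ncount f a r
      \<and> 1 < s r / r \<and> ncount f a r * ln (s r / r) \<le> Ncount f a (s r)) at_top"
    using eventually_ncount_Ncount_ge_1[OF fin r1] eventually_ge_at_top[of 1] s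
  proof eventually_elim
    case (elim r)
    then have "ncount f a r * ln (s r / r) \<le> Ncount f a (s r)"
      by (intro ncount_mult_ln_le_Ncount[OF fin]) auto
    with elim show ?case by simp
  qed
qed

theorem lemma4p2:
  fixes \<phi> s :: "real \<Rightarrow> real" and R0 :: real
    and f :: "complex \<Rightarrow> complex" and a :: "complex option"
  assumes R0: "R0 > 0"
    and phi_pos: "\<forall>r>R0. \<phi> r > 0"
    and phi_mono: "mono_on {R0<..} \<phi>"
    and phi_unbdd: "\<not> bdd_above (\<phi> ` {R0<..})"
    and phi_bounds: "\<forall>r>R0. ln r \<le> \<phi> r \<and> \<phi> r \<le> r"
    and s_pos: "\<forall>r>R0. s r > 0"
    and s_mono: "mono_on {R0<..} s"
    and s_bounds: "\<forall>r>R0. r < s r \<and> s r \<le> r\<^sup>2"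
    and s_liminf: "Liminf at_top (\<lambda>r. ereal (s r / r)) > 1"
    and f_mero: "f nicely_meromorphic_on UNIV"
    and f_nonconst: "\<not> (\<exists>c. \<forall>z. f z = c)"
    and f_order: "rho_phi \<phi> (nev_T f) < \<infinity>"
  shows "rho_phi \<phi> (Ncount f a) \<le> rho_phi \<phi> (ncount f a) + beta_phi \<phi>
     \<and> rho_phi \<phi> (Ncount f a) \<ge>
         (if rho_phi \<phi> (ncount f a) = -\<infinity> then -\<infinity>
          else alpha_phi_s \<phi> s * rho_phi \<phi> (ncount f a))
         + alpha_phi_s \<phi> s * gamma_phi_s \<phi> s"
proof -
  have fin: "\<And>r. finite {z\<in>apoints f a. cmod z \<le> r}"
    by (rule finite_apoints_cball[OF f_mero f_nonconst])
  have \<phi>: "filterlim \<phi> at_top at_top"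
    by (rule filterlim_at_top_if_mono_on_unbounded[OF phi_mono phi_unbdd])
  have ev: "eventually (\<lambda>r. ln r \<le> \<phi> r \<and> r < s r \<and> s r \<le> r\<^sup>2 \<and> \<phi> r \<le> \<phi> (s r)) at_top"
    using eventually_gt_at_top[of R0]
  proof eventually_elim
    case (elim r)
    with s_bounds have "r < s r" by auto
    with elim have "\<phi> r \<le> \<phi> (s r)" by (intro mono_onD[OF phi_mono]) auto
    with elim phi_bounds s_bounds show ?case by auto
  qed
  obtain b where b: "beta_phi \<phi> = ereal b"
    by (rule beta_phi_finite) (use ev in \<open>auto elim: eventually_mono\<close>)
  obtain g where g: "gamma_phi_s \<phi> s = ereal g"
    by (rule gamma_phi_s_finite[OF \<phi> _ s_liminf]) (use ev in \<open>auto elim: eventually_mono\<close>)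
  obtain \<alpha> where \<alpha>: "alpha_phi_s \<phi> s = ereal \<alpha>"
    by (rule alpha_phi_s_finite[OF \<phi>]) (use ev in \<open>auto elim: eventually_mono\<close>)
  show ?thesis
  proof (cases "\<forall>r. ncount f a r = 0")
    case True
    then show ?thesis using rho_phi_ncount_Ncount_eq_MInfty[OF fin \<phi>] b g \<alpha> by simp
  next
    case False
    then obtain r1 where r1: "ncount f a r1 \<noteq> 0" by blast
    have "eventually (\<lambda>r. r < s r \<and> \<phi> r \<le> \<phi> (s r)) at_top"
      using ev by (auto elim: eventually_mono)
    then show ?thesis
      using rho_phi_Ncount_le_add_beta_phi[OF fin \<phi> b r1] rho_phi_ncount_nonneg[OF fin \<phi> r1]
        alpha_phi_s_mult_rho_phi_le_rho_phi_Ncount[OF fin \<phi> g r1]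
      by auto
  qed
qed

end
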